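(* Let $(S,d)$ be a finite metric space partitioned into two disjoint groups $S=S_1\cup S_2$, let $k_1,k_2$ be nonnegative integers with $k=k_1+k_2$, and let $r^*$ be the optimal radius of the fair $k$-center problem. For $l\in\{1,2\}$ let $\Gamma_l\subseteq S_l$ be a $2r^*$-independent center set of $S_l$, with $|\Gamma_1|>k_1$ and $|\Gamma_2|>k_2$. Run Algorithm A (described in the context). For the $j$-th iteration of its while-loop, let $C^j$ and $\Gamma^j_l$ ($l=1,2$) denote the values of $C$ and of the current sets $\Gamma_l$ in that iteration. Then for every such $j$ and each $l\in\{1,2\}$: (1) $|\Gamma^j_l|\le k-|C^j|$; (2) $|C^j|\le k$; (3) $|C^j\cap S_l|\le k_l$.
   Context: Fair $k$-center: $C\subseteq S$ is feasible if $|C\cap S_l|\le k_l$ for each $l$; cost $\max_{s\in S}d(s,C)$, $d(s,C)=\min_{c\in C}d(s,c)$, $d(s,\emptyset)=\infty$; $r^*$ is the minimum cost over feasible $C$. For $T\subseteq S$, $\Gamma\subseteq T$ is a $\lambda$-independent center set of $T$ if distinct points of $\Gamma$ are at distance $>\lambda$ and every point of $T$ is within $\lambda$ of some point of $\Gamma$. Algorithm A (input $\Gamma_1,\Gamma_2$). Phase 1: $C\leftarrow\emptyset$; build the bipartite graph $G$ on vertex set $\Gamma_1\cup\Gamma_2$ where $p\in\Gamma_1$, $q\in\Gamma_2$ are adjacent iff $d(p,q)\le 3r^*$; for each degree-$0$ vertex $i$, if $d(C,i)>2r^*$ add $i$ to $C$; remove all degree-$0$ vertices from $G$ (throughout, the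 current $\Gamma_l$ means the vertices of $G$ that lie in the original $\Gamma_l$). Phase 2: while $|C|\le k$ and $G$ is nonempty: if $G$ has no vertex of degree $1$, pick an arbitrary edge, let $p$ be one of its endpoints (arbitrary) and $q$ the other, add $p$ to $C$ and delete $p$ and $q$ from $G$ (and from the current $\Gamma$ sets containing them); otherwise, pick a vertex $i$ of $G$ maximizing $|N_1(i)|$, where $N_1(i)$ is the set of degree-$1$ neighbours of $i$ in $G$, add $i$ to $C$ and delete $i$ and $N_1(i)$ from $G$ (and from the current $\Gamma$ sets). Then, if some $l\in\{1,2\}$ satisfies $|C\cap S_l|+|\Gamma_l|\le k_l$ (current $\Gamma_l$), set $C\leftarrow C\cup\Gamma_l$, let $\Gamma'_{3-l}=\{p\in\Gamma_{3-l}: d(p,C)>3r^*\}$ (current $\Gamma_{3-l}$), and return $C\cup\Gamma'_{3-l}$. If the loop ends without returning, output $C$. *)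

theory Defs
  imports "HOL-Analysis.Abstract_Metric_Spaces" "HOL-Library.Extended_Real"
begin

definition fair_feasible ::
  "'a set \<Rightarrow> 'a set \<Rightarrow> 'a set \<Rightarrow> nat \<Rightarrow> nat \<Rightarrow> 'a set \<Rightarrow> bool" where
  "fair_feasible S S1 S2 k1 k2 C \<longleftrightarrow>
     C \<subseteq> S \<and> card (C \<inter> S1) \<le> k1 \<and> card (C \<inter> S2) \<le> k2"

text \<open>Distance of a point to a set, d(s,C) = min over C, with d(s,{}) = infinity.\<close>
definition dist_to_set :: "('a \<Rightarrow> 'a \<Rightarrow> real) \<Rightarrow> 'a \<Rightarrow> 'a set \<Rightarrow> ereal" where
  "dist_to_set d s C = (INF c\<in>C. ereal (d s c))"

definition kc_cost :: "('a \<Rightarrow> 'a \<Rightarrow> real) \<Rightarrow> 'a set \<Rightarrow> 'a set \<Rightarrow> ereal" where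
  "kc_cost d S C = (SUP s\<in>S. dist_to_set d s C)"

definition opt_radius ::
  "('a \<Rightarrow> 'a \<Rightarrow> real) \<Rightarrow> 'a set \<Rightarrow> 'a set \<Rightarrow> 'a set \<Rightarrow> nat \<Rightarrow> nat \<Rightarrow> ereal" where
  "opt_radius d S S1 S2 k1 k2 = (INF C\<in>{C. fair_feasible S S1 S2 k1 k2 C}. kc_cost d S C)"

definition indep_center_set ::
  "('a \<Rightarrow> 'a \<Rightarrow> real) \<Rightarrow> 'a set \<Rightarrow> 'a set \<Rightarrow> real \<Rightarrow> bool" where
  "indep_center_set d T \<Gamma> lam \<longleftrightarrow>
     \<Gamma> \<subseteq> T \<and>
     (\<forall>p\<in>\<Gamma>. \<forall>q\<in>\<Gamma>. p \<noteq> q \<longrightarrow> d p q > lam) \<and>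
     (\<forall>t\<in>T. \<exists>p\<in>\<Gamma>. d t p \<le> lam)"

text \<open>Edges of the bipartite graph G on Gamma1 \<union> Gamma2: p in Gamma1, q in Gamma2, d(p,q) \<le> 3r*.
  The graph at any time is the subgraph induced on the current vertex set V.\<close>
definition adjA :: "('a \<Rightarrow> 'a \<Rightarrow> real) \<Rightarrow> 'a set \<Rightarrow> 'a set \<Rightarrow> real \<Rightarrow> 'a \<Rightarrow> 'a \<Rightarrow> bool" where
  "adjA d G1 G2 r x y \<longleftrightarrow>
     ((x \<in> G1 \<and> y \<in> G2) \<or> (x \<in> G2 \<and> y \<in> G1)) \<and> d x y \<le> 3 * r"

definition nbrs :: "('a \<Rightarrow> 'a \<Rightarrow> real) \<Rightarrow> 'a set \<Rightarrow> 'a set \<Rightarrow> real \<Rightarrow> 'a set \<Rightarrow> 'a \<Rightarrow> 'a set" where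
  "nbrs d G1 G2 r V x = {y \<in> V. adjA d G1 G2 r x y}"

definition degA :: "('a \<Rightarrow> 'a \<Rightarrow> real) \<Rightarrow> 'a set \<Rightarrow> 'a set \<Rightarrow> real \<Rightarrow> 'a set \<Rightarrow> 'a \<Rightarrow> nat" where
  "degA d G1 G2 r V x = card (nbrs d G1 G2 r V x)"

definition N1 :: "('a \<Rightarrow> 'a \<Rightarrow> real) \<Rightarrow> 'a set \<Rightarrow> 'a set \<Rightarrow> real \<Rightarrow> 'a set \<Rightarrow> 'a \<Rightarrow> 'a set" where
  "N1 d G1 G2 r V x = {y \<in> nbrs d G1 G2 r V x. degA d G1 G2 r V y = 1}"

text \<open>Phase 1: the degree-0 vertices are processed in some (arbitrary) order xs; a vertex i
  is added when d(C,i) > 2r* (vacuously true for C = {}).\<close>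
definition phase1_C :: "('a \<Rightarrow> 'a \<Rightarrow> real) \<Rightarrow> real \<Rightarrow> 'a list \<Rightarrow> 'a set" where
  "phase1_C d r xs =
     foldl (\<lambda>C i. if dist_to_set d i C > ereal (2 * r) then insert i C else C) {} xs"

definition isolated0 :: "('a \<Rightarrow> 'a \<Rightarrow> real) \<Rightarrow> 'a set \<Rightarrow> 'a set \<Rightarrow> real \<Rightarrow> 'a set" where
  "isolated0 d G1 G2 r = {x \<in> G1 \<union> G2. degA d G1 G2 r (G1 \<union> G2) x = 0}"

definition stepA ::
  "('a \<Rightarrow> 'a \<Rightarrow> real) \<Rightarrow> 'a set \<Rightarrow> 'a set \<Rightarrow> real \<Rightarrow> 'a set \<Rightarrow> 'a set \<Rightarrow> 'a set \<Rightarrow> 'a set \<Rightarrow> bool" where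
  "stepA d G1 G2 r C V C' V' \<longleftrightarrow>
     ((\<forall>x\<in>V. degA d G1 G2 r V x \<noteq> 1) \<and>
        (\<exists>p q. p \<in> V \<and> q \<in> V \<and> adjA d G1 G2 r p q \<and> C' = insert p C \<and> V' = V - {p, q}))
   \<or> ((\<exists>x\<in>V. degA d G1 G2 r V x = 1) \<and>
        (\<exists>i\<in>V. (\<forall>j\<in>V. card (N1 d G1 G2 r V j) \<le> card (N1 d G1 G2 r V i)) \<and>
               C' = insert i C \<and> V' = V - insert i (N1 d G1 G2 r V i)))"

text \<open>Return test at the end of the loop body (current Gamma_l = V \<inter> Gamma_l).\<close>
definition returnsA ::
  "'a set \<Rightarrow> 'a set \<Rightarrow> nat \<Rightarrow> nat \<Rightarrow> 'a set \<Rightarrow> 'a set \<Rightarrow> 'a set \<Rightarrow> 'a set \<Rightarrow> bool" where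
  "returnsA S1 S2 k1 k2 G1 G2 C V \<longleftrightarrow>
     card (C \<inter> S1) + card (V \<inter> G1) \<le> k1 \<or> card (C \<inter> S2) + card (V \<inter> G2) \<le> k2"

text \<open>C V: (C,V) are the values of C and of the vertex set of G at the start
  of some iteration of the while loop (i.e. the loop guard |C| \<le> k and G \<noteq> {} holds there),
  for some run of Algorithm A (over all arbitrary choices).\<close>
inductive algA_iter ::
  "('a \<Rightarrow> 'a \<Rightarrow> real) \<Rightarrow> 'a set \<Rightarrow> 'a set \<Rightarrow> nat \<Rightarrow> nat \<Rightarrow> 'a set \<Rightarrow> 'a set \<Rightarrow> real
     \<Rightarrow> 'a set \<Rightarrow> 'a set \<Rightarrow> bool"
  for d S1 S2 k1 k2 G1 G2 r where
  first: "\<lbrakk> distinct xs; set xs = isolated0 d G1 G2 r;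
           C = phase1_C d r xs; V = (G1 \<union> G2) - isolated0 d G1 G2 r;
           card C \<le> k1 + k2; V \<noteq> {} \<rbrakk>
          \<Longrightarrow> algA_iter d S1 S2 k1 k2 G1 G2 r C V"
| step: "\<lbrakk> algA_iter d S1 S2 k1 k2 G1 G2 r C V; stepA d G1 G2 r C V C' V';
           \<not> returnsA S1 S2 k1 k2 G1 G2 C' V';
           card C' \<le> k1 + k2; V' \<noteq> {} \<rbrakk>
          \<Longrightarrow> algA_iter d S1 S2 k1 k2 G1 G2 r C' V'"

end

theory Submission
  imports Defs
begin

text \<open>Fix an optimal fair solution and assign every point a center of it within distance r*.
  Two points of one 2r*-independent set never share a center, and two points of opposite sets
  that share a center are adjacent in G. Hence an isolated vertex of \<Gamma>_l is served by a
  center in S_l, and the centers of \<Gamma>_1 together with the isolated vertices are pairwise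
  distinct; this bounds the state after Phase 1. Each Phase 2 step adds one vertex to C and
  deletes it together with a neighbour, i.e. at least one vertex of each \<Gamma>_l, so
  |\<Gamma>_l| + |C| never grows. Fairness of C then follows from the failed return test.\<close>

lemma foldl_insert_if_subset:
  "foldl (\<lambda>C i. if P C i then insert i C else C) A xs \<subseteq> A \<union> set xs"
proof (induction xs arbitrary: A)
  case (Cons x xs)
  have "foldl (\<lambda>C i. if P C i then insert i C else C) A (x # xs)
      \<subseteq> (if P A x then insert x A else A) \<union> set xs"
    using Cons.IH by simp
  then show ?case by auto
qed simp

lemma phase1_C_subset: "phase1_C d r xs \<subseteq> set xs"
  using foldl_insert_if_subset[of _ "{}" xs] unfolding phase1_C_def by simp

lemma dist_to_set_le_iff:
  assumes "finite C"
  shows "dist_to_set d s C \<le> ereal r \<longleftrightarrow> (\<exists>c\<in>C. d s c \<le> r)"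
proof (cases "C = {}")
  case True
  then show ?thesis by (simp add: dist_to_set_def top_ereal_def)
next
  case False
  then have "dist_to_set d s C = Min ((\<lambda>c. ereal (d s c)) ` C)"
    using assms by (simp add: dist_to_set_def Min_Inf)
  then show ?thesis using assms False by (simp add: Min_le_iff)
qed

lemma close_center_if_kc_cost_le:
  assumes "finite C" "kc_cost d S C \<le> ereal r" "s \<in> S"
  shows "\<exists>c\<in>C. d s c \<le> r"
proof -
  have "dist_to_set d s C \<le> kc_cost d S C"
    unfolding kc_cost_def using assms(3) by (rule SUP_upper)
  also have "\<dots> \<le> ereal r" by (fact assms(2))
  finally show ?thesis using dist_to_set_le_iff[OF assms(1)] by blast
qed

lemma opt_radius_attained:
  assumes "finite S"
  obtains C where "fair_feasible S S1 S2 k1 k2 C" "kc_cost d S C = opt_radius d S S1 S2 k1 k2"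
proof -
  let ?costs = "kc_cost d S ` {C. fair_feasible S S1 S2 k1 k2 C}"
  have "finite ?costs"
    using assms by (auto simp: fair_feasible_def intro: finite_subset[of _ "Pow S"])
  moreover have "{} \<in> {C. fair_feasible S S1 S2 k1 k2 C}" by (simp add: fair_feasible_def)
  then have "?costs \<noteq> {}" by blast
  ultimately have "Min ?costs \<in> ?costs" "Min ?costs = opt_radius d S S1 S2 k1 k2"
    unfolding opt_radius_def by (rule Min_in, rule Min_Inf)
  then show ?thesis using that by auto
qed

lemma card_Int_add_card_Int_eq:
  assumes "finite C" "C \<subseteq> A \<union> B" "A \<inter> B = {}"
  shows "card C = card (C \<inter> A) + card (C \<inter> B)"
proof -
  have "C - A = C \<inter> B" using assms(2,3) by blast
  then show ?thesis using card_Int_Diff[OF assms(1), of A] by simp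
qed

lemma fair_feasible_swap: "fair_feasible S S2 S1 k2 k1 C = fair_feasible S S1 S2 k1 k2 C"
  by (auto simp: fair_feasible_def)

lemma isolated0_swap: "isolated0 d G2 G1 r = isolated0 d G1 G2 r"
proof -
  have "adjA d G2 G1 r = adjA d G1 G2 r" by (auto simp: fun_eq_iff adjA_def)
  then show ?thesis by (simp add: isolated0_def degA_def nbrs_def Un_commute)
qed

lemma fair_if_not_returnsA:
  assumes "card C = card (C \<inter> S1) + card (C \<inter> S2)"
    and "card (V \<inter> G1) + card C \<le> k1 + k2" "card (V \<inter> G2) + card C \<le> k1 + k2"
    and "\<not> returnsA S1 S2 k1 k2 G1 G2 C V"
  shows "card (C \<inter> S1) \<le> k1" "card (C \<inter> S2) \<le> k2"
  using assms unfolding returnsA_def by linarith+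

context Metric_space
begin

lemma adjA_commute: "adjA d G1 G2 r x y \<longleftrightarrow> adjA d G1 G2 r y x"
  by (auto simp: adjA_def commute)

lemma in_N1_if_degree_one:
  assumes "degA d G1 G2 r V x = 1" "x \<in> V"
  obtains j where "j \<in> V" "x \<in> N1 d G1 G2 r V j"
proof -
  obtain j where "nbrs d G1 G2 r V x = {j}"
    using assms(1) unfolding degA_def by (rule card_1_singletonE)
  then have "j \<in> V" "adjA d G1 G2 r j x" by (auto simp: nbrs_def adjA_commute)
  then show ?thesis using that assms by (auto simp: N1_def nbrs_def)
qed

lemma stepA_removes_adjacent_pair:
  assumes "finite V" "stepA d G1 G2 r C V C' V'"
  obtains p q where "p \<in> V" "q \<in> V" "adjA d G1 G2 r p q" "C' = insert p C" "V' \<subseteq> V - {p, q}"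
  using assms(2) unfolding stepA_def
proof (elim disjE conjE exE bexE)
  fix x i
  assume x: "x \<in> V" "degA d G1 G2 r V x = 1" and i: "i \<in> V"
    and i_max: "\<forall>j\<in>V. card (N1 d G1 G2 r V j) \<le> card (N1 d G1 G2 r V i)"
    and step: "C' = insert i C" "V' = V - insert i (N1 d G1 G2 r V i)"
  have fin: "finite (N1 d G1 G2 r V j)" for j using assms(1) by (simp add: N1_def nbrs_def)
  obtain j where "j \<in> V" "x \<in> N1 d G1 G2 r V j"
    using in_N1_if_degree_one[OF x(2,1)] .
  then have "0 < card (N1 d G1 G2 r V j)" using fin card_gt_0_iff by blast
  also have "\<dots> \<le> card (N1 d G1 G2 r V i)" using i_max \<open>j \<in> V\<close> by simp
  finally have "N1 d G1 G2 r V i \<noteq> {}" by auto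
  then obtain q where "q \<in> N1 d G1 G2 r V i" by blast
  then have "q \<in> V" "adjA d G1 G2 r i q" by (auto simp: N1_def nbrs_def)
  then show thesis using that[of i q] i step \<open>q \<in> N1 d G1 G2 r V i\<close> by blast
qed (use that in blast)

end

locale center_assignment = Metric_space S d
  for S :: "'a set" and d +
  fixes S1 S2 G1 G2 :: "'a set" and k1 k2 :: nat and r :: real
    and Cs :: "'a set" and f :: "'a \<Rightarrow> 'a"
  assumes finite_S: "finite S"
    and S_eq: "S = S1 \<union> S2" and S1_S2_disjoint: "S1 \<inter> S2 = {}"
    and indep_G1: "indep_center_set d S1 G1 (2 * r)"
    and indep_G2: "indep_center_set d S2 G2 (2 * r)"
    and Cs_feasible: "fair_feasible S S1 S2 k1 k2 Cs"
    and f_in_Cs: "\<And>s. s \<in> S \<Longrightarrow> f s \<in> Cs"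
    and dist_f_le: "\<And>s. s \<in> S \<Longrightarrow> d s (f s) \<le> r"
begin

lemma G1_subset: "G1 \<subseteq> S1" and G2_subset: "G2 \<subseteq> S2"
  using indep_G1 indep_G2 by (auto simp: indep_center_set_def)

lemma Cs_subset: "Cs \<subseteq> S"
  using Cs_feasible by (simp add: fair_feasible_def)

lemma card_Cs_le: "card Cs \<le> k1 + k2"
  using card_Int_add_card_Int_eq[of Cs S1 S2] Cs_feasible finite_subset[OF Cs_subset finite_S]
    S_eq S1_S2_disjoint by (auto simp: fair_feasible_def)

lemma dist_le_if_same_center:
  assumes "p \<in> S" "q \<in> S" "f p = f q"
  shows "d p q \<le> 2 * r"
proof -
  have "f p \<in> S" using f_in_Cs Cs_subset assms(1) by blast
  then have "d p q \<le> d p (f p) + d (f p) q" using triangle assms(1,2) by blast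
  also have "d (f p) q = d q (f q)" using assms(3) commute by simp
  finally show ?thesis using dist_f_le[OF assms(1)] dist_f_le[OF assms(2)] by linarith
qed

lemma inj_on_indep_center_set:
  assumes "indep_center_set d T \<Gamma> (2 * r)" "T \<subseteq> S"
  shows "inj_on f \<Gamma>"
proof (rule inj_onI, rule ccontr)
  fix p q
  assume "p \<in> \<Gamma>" "q \<in> \<Gamma>" "f p = f q" "p \<noteq> q"
  then have "2 * r < d p q" "p \<in> S" "q \<in> S"
    using assms by (auto simp: indep_center_set_def)
  then show False using dist_le_if_same_center \<open>f p = f q\<close> by fastforce
qed

lemma adjA_if_same_center:
  assumes "p \<in> G1" "q \<in> G2" "f p = f q"
  shows "adjA d G1 G2 r p q"
proof -
  have "p \<in> S" "q \<in> S" using assms G1_subset G2_subset S_eq by auto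
  moreover have "0 \<le> r" using dist_f_le[OF \<open>p \<in> S\<close>] nonneg order_trans by blast
  ultimately show ?thesis using dist_le_if_same_center assms by (force simp: adjA_def)
qed

lemma not_isolated_if_adjA:
  assumes "adjA d G1 G2 r p q"
  shows "p \<notin> isolated0 d G1 G2 r"
proof -
  have "finite (G1 \<union> G2)" using G1_subset G2_subset S_eq finite_S finite_subset by auto
  moreover have "q \<in> nbrs d G1 G2 r (G1 \<union> G2) p" using assms by (auto simp: nbrs_def adjA_def)
  ultimately show ?thesis by (auto simp: isolated0_def degA_def nbrs_def)
qed

text \<open>A center in S_2 would lie within 2r* of some point of \<Gamma>_2, hence within 3r* of p.\<close>
lemma center_in_S1_if_isolated:
  assumes "p \<in> G1" "p \<in> isolated0 d G1 G2 r"
  shows "f p \<in> S1"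
proof (rule ccontr)
  assume "f p \<notin> S1"
  have "p \<in> S" using assms(1) G1_subset S_eq by auto
  then have "f p \<in> S2" using \<open>f p \<notin> S1\<close> f_in_Cs Cs_subset S_eq by auto
  then obtain q where q: "q \<in> G2" "d (f p) q \<le> 2 * r"
    using indep_G2 by (auto simp: indep_center_set_def)
  have "q \<in> S" "f p \<in> S" using q(1) G2_subset \<open>f p \<in> S2\<close> S_eq by auto
  then have "d p q \<le> 3 * r" using triangle[of p "f p" q] dist_f_le \<open>p \<in> S\<close> q(2) by fastforce
  then have "adjA d G1 G2 r p q" using assms(1) q(1) by (simp add: adjA_def)
  then show False using not_isolated_if_adjA assms(2) by blast
qed

lemma inj_on_G1_isolated: "inj_on f (G1 \<union> isolated0 d G1 G2 r)"
proof -
  let ?I2 = "isolated0 d G1 G2 r \<inter> G2"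
  have "G1 \<union> isolated0 d G1 G2 r = G1 \<union> ?I2" by (auto simp: isolated0_def)
  moreover have "inj_on f G1" "inj_on f G2"
    using inj_on_indep_center_set indep_G1 indep_G2 S_eq by auto
  moreover have "f p \<noteq> f q" if "p \<in> G1" "q \<in> ?I2" for p q
    using adjA_if_same_center[of p q] not_isolated_if_adjA[of q p] adjA_commute that by blast
  ultimately show ?thesis by (auto simp: inj_on_Un inj_on_subset)
qed

lemma card_Int_S1_le_if_isolated:
  assumes "C \<subseteq> isolated0 d G1 G2 r"
  shows "card (C \<inter> S1) \<le> k1"
proof -
  let ?I1 = "isolated0 d G1 G2 r \<inter> G1"
  have inj: "inj_on f ?I1" using inj_on_G1_isolated by (rule inj_on_subset) blast
  have "finite ?I1" using G1_subset S_eq finite_S finite_subset by blast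
  moreover have "C \<inter> S1 \<subseteq> ?I1"
    using assms G2_subset S1_S2_disjoint by (auto simp: isolated0_def)
  ultimately have "card (C \<inter> S1) \<le> card ?I1" by (rule card_mono)
  also have "\<dots> = card (f ` ?I1)" using inj by (simp add: card_image)
  also have "\<dots> \<le> card (Cs \<inter> S1)"
    using center_in_S1_if_isolated f_in_Cs G1_subset S_eq finite_subset[OF Cs_subset finite_S]
    by (intro card_mono) auto
  finally show ?thesis using Cs_feasible by (simp add: fair_feasible_def)
qed

lemma card_remaining_G1_add_card_le:
  assumes "C \<subseteq> isolated0 d G1 G2 r"
  shows "card ((G1 \<union> G2 - isolated0 d G1 G2 r) \<inter> G1) + card C \<le> k1 + k2"
proof -
  let ?R = "(G1 \<union> G2 - isolated0 d G1 G2 r) \<inter> G1" and ?U = "G1 \<union> isolated0 d G1 G2 r"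
  have "finite ?U" using G1_subset G2_subset S_eq finite_S finite_subset
    by (auto simp: isolated0_def)
  moreover have "?R \<union> C \<subseteq> ?U" "?R \<inter> C = {}" using assms by auto
  ultimately have "card ?R + card C \<le> card ?U"
    by (metis card_Un_disjoint card_mono finite_Un finite_subset)
  also have "\<dots> = card (f ` ?U)" using inj_on_G1_isolated by (simp add: card_image)
  also have "\<dots> \<le> card Cs"
    using f_in_Cs G1_subset G2_subset S_eq finite_subset[OF Cs_subset finite_S]
    by (intro card_mono) (auto simp: isolated0_def)
  finally show ?thesis using card_Cs_le by linarith
qed

lemma center_assignment_swap: "center_assignment S d S2 S1 G2 G1 k2 k1 r Cs f"
proof
  show "fair_feasible S S2 S1 k2 k1 Cs" using Cs_feasible by (simp add: fair_feasible_swap)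
qed (use finite_S S_eq S1_S2_disjoint indep_G1 indep_G2 f_in_Cs dist_f_le in auto)

definition loop_invariant :: "'a set \<Rightarrow> 'a set \<Rightarrow> bool" where
  "loop_invariant C V \<longleftrightarrow> C \<subseteq> S \<and> V \<subseteq> S \<and> C \<inter> V = {}
     \<and> card (V \<inter> G1) + card C \<le> k1 + k2 \<and> card (V \<inter> G2) + card C \<le> k1 + k2
     \<and> card (C \<inter> S1) \<le> k1 \<and> card (C \<inter> S2) \<le> k2"

lemma loop_invariant_phase1:
  assumes "C \<subseteq> isolated0 d G1 G2 r"
  shows "loop_invariant C (G1 \<union> G2 - isolated0 d G1 G2 r)"
proof -
  interpret swapped: center_assignment S d S2 S1 G2 G1 k2 k1 r Cs f
    by (rule center_assignment_swap)
  let ?V = "G1 \<union> G2 - isolated0 d G1 G2 r"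
  have C_swapped: "C \<subseteq> isolated0 d G2 G1 r" using assms by (simp add: isolated0_swap)
  have "?V = G2 \<union> G1 - isolated0 d G2 G1 r" by (auto simp: isolated0_swap)
  then have "card (?V \<inter> G2) + card C \<le> k1 + k2"
    using swapped.card_remaining_G1_add_card_le[OF C_swapped] by simp
  moreover have "card (C \<inter> S2) \<le> k2"
    using swapped.card_Int_S1_le_if_isolated[OF C_swapped] .
  moreover have "C \<subseteq> S" "?V \<subseteq> S" "C \<inter> ?V = {}"
    using assms G1_subset G2_subset S_eq by (auto simp: isolated0_def)
  ultimately show ?thesis
    using card_Int_S1_le_if_isolated[OF assms] card_remaining_G1_add_card_le[OF assms]
    unfolding loop_invariant_def by blast
qed

lemma loop_invariant_step:
  assumes inv: "loop_invariant C V" and step: "stepA d G1 G2 r C V C' V'"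
    and no_return: "\<not> returnsA S1 S2 k1 k2 G1 G2 C' V'"
  shows "loop_invariant C' V'"
proof -
  have "finite V" "finite C" using inv finite_S finite_subset by (auto simp: loop_invariant_def)
  then obtain p q where pq: "p \<in> V" "q \<in> V" "adjA d G1 G2 r p q"
    and C': "C' = insert p C" and V': "V' \<subseteq> V - {p, q}"
    using stepA_removes_adjacent_pair step by metis
  have "p \<notin> C" using pq(1) inv by (auto simp: loop_invariant_def)
  then have card_C': "card C' = Suc (card C)" using C' \<open>finite C\<close> by simp
  have shrink: "card (V' \<inter> G) < card (V \<inter> G)" if "p \<in> G \<or> q \<in> G" for G
    using that pq(1,2) V' \<open>finite V\<close> by (intro psubset_card_mono) auto
  have "p \<in> G1 \<or> q \<in> G1" "p \<in> G2 \<or> q \<in> G2" using pq(3) by (auto simp: adjA_def)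
  then have "card (V' \<inter> G1) < card (V \<inter> G1)" "card (V' \<inter> G2) < card (V \<inter> G2)"
    using shrink by blast+
  moreover have "card (V \<inter> G1) + card C \<le> k1 + k2" "card (V \<inter> G2) + card C \<le> k1 + k2"
    using inv by (simp_all add: loop_invariant_def)
  ultimately have bounds:
    "card (V' \<inter> G1) + card C' \<le> k1 + k2" "card (V' \<inter> G2) + card C' \<le> k1 + k2"
    using card_C' by linarith+
  have "C' \<subseteq> S" "V' \<subseteq> S" "C' \<inter> V' = {}"
    using inv C' V' pq(1) by (auto simp: loop_invariant_def)
  moreover have "card C' = card (C' \<inter> S1) + card (C' \<inter> S2)"
    using card_Int_add_card_Int_eq \<open>C' \<subseteq> S\<close> finite_S finite_subset S_eq S1_S2_disjoint
    by metis
  ultimately show ?thesis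
    using fair_if_not_returnsA[OF _ bounds no_return] bounds unfolding loop_invariant_def by blast
qed

lemma loop_invariant_algA_iter:
  assumes "algA_iter d S1 S2 k1 k2 G1 G2 r C V"
  shows "loop_invariant C V"
  using assms
proof (induction rule: algA_iter.induct)
  case (first xs C V)
  then have "C \<subseteq> isolated0 d G1 G2 r" using phase1_C_subset by metis
  then show ?case using loop_invariant_phase1 first.hyps(4) by simp
next
  case (step C V C' V')
  then show ?case using loop_invariant_step by blast
qed

end

theorem lemma4:
  fixes d :: "'a \<Rightarrow> 'a \<Rightarrow> real" and S S1 S2 G1 G2 C V :: "'a set"
    and k1 k2 :: nat and r :: real
  assumes "Metric_space S d" and "finite S"
    and "S = S1 \<union> S2" and "S1 \<inter> S2 = {}"
    and "opt_radius d S S1 S2 k1 k2 = ereal r"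
    and "indep_center_set d S1 G1 (2 * r)" and "indep_center_set d S2 G2 (2 * r)"
    and "card G1 > k1" and "card G2 > k2"
    and "algA_iter d S1 S2 k1 k2 G1 G2 r C V"
  shows "int (card (V \<inter> G1)) \<le> int (k1 + k2) - int (card C)
       \<and> int (card (V \<inter> G2)) \<le> int (k1 + k2) - int (card C)
       \<and> card C \<le> k1 + k2
       \<and> card (C \<inter> S1) \<le> k1 \<and> card (C \<inter> S2) \<le> k2"
proof -
  obtain Cs where Cs: "fair_feasible S S1 S2 k1 k2 Cs" "kc_cost d S Cs = ereal r"
    using opt_radius_attained[OF assms(2)] assms(5) by metis
  then have "finite Cs" using assms(2) finite_subset by (auto simp: fair_feasible_def)
  then have "\<exists>c\<in>Cs. d s c \<le> r" if "s \<in> S" for s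
    using close_center_if_kc_cost_le[of Cs d S r s] Cs(2) that by simp
  then obtain f where f: "\<And>s. s \<in> S \<Longrightarrow> f s \<in> Cs \<and> d s (f s) \<le> r" by metis
  have "center_assignment S d S1 S2 G1 G2 k1 k2 r Cs f"
    using assms(1-4,6,7) Cs(1) f by (simp add: center_assignment_def center_assignment_axioms_def)
  then interpret center_assignment S d S1 S2 G1 G2 k1 k2 r Cs f .
  have "loop_invariant C V" using assms(10) by (rule loop_invariant_algA_iter)
  then have "card (V \<inter> G1) + card C \<le> k1 + k2" "card (V \<inter> G2) + card C \<le> k1 + k2"
    "card (C \<inter> S1) \<le> k1" "card (C \<inter> S2) \<le> k2"
    by (simp_all add: loop_invariant_def)
  then show ?thesis by linarith
qed

end
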